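(* For any adversary $\mathsf{A}$ against the IND-CPA security of CTRU.PKE, there exist adversaries $\mathsf{B}$ and $\mathsf{C}$ (with the same running time as $\mathsf{A}$) such that $$\mathbf{Adv}^{\text{IND-CPA}}_{\text{CTRU.PKE}}(\mathsf{A})\le\mathbf{Adv}^{\text{NTRU}}_{\mathcal{R}_q,\Psi_1}(\mathsf{B})+\mathbf{Adv}^{\text{RLWE}}_{\mathcal{R}_q,\Psi_2}(\mathsf{C}).$$
   Context: $n$ is a positive integer of the form $3^l2^e$ divisible by $8$; $\mathcal{R}_q=\mathbb{Z}_q[x]/(x^n-x^{n/2}+1)$; $q,q_2$ positive integers with $q_2<q$, $\gcd(q,2)=1$; $\Psi_1,\Psi_2$ distributions over $\mathbb{Z}[x]/(x^n-x^{n/2}+1)$. $\lfloor x\rceil$ is coefficient-wise rounding to the nearest integer. Message space $\mathcal{M}=\{0,1\}^{n/2}$. $\mathrm{PolyEncode}(m)$: with $\mathbf{H}$ the $4\times8$ binary matrix with rows $(1,1,1,1,0,0,0,0)$, $(0,0,1,1,1,1,0,0)$, $(0,0,0,0,1,1,1,1)$, $(0,1,0,1,0,1,0,1)$, split $m$ into quadruples $\mathbf{k}_i=(m_{4i},\dots,m_{4i+3})$ and set coefficients $8i,\dots,8i+7$ to $\frac{q}{2}(\mathbf{k}_i\mathbf{H}\bmod2)$. CTRU.PKE: KeyGen: $f',g\leftarrow\Psi_1$, $f:=2f'+1$; restart if $f$ is not invertible in $\mathcal{R}_q$; $h:=g/f\in\mathcal{R}_q$; $pk=h$, $sk=f$.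 Enc$(h,m)$: $r,e\leftarrow\Psi_2$; $\sigma:=hr+e$; $c:=\lfloor\frac{q_2}{q}(\sigma+\lfloor\mathrm{PolyEncode}(m)\rceil)\rceil\bmod q_2$. (Decryption is irrelevant here.) IND-CPA advantage: $\mathbf{Adv}^{\text{IND-CPA}}_{\text{PKE}}(\mathsf{A})=\big|\Pr[b'=b]-\frac12\big|$ in the experiment $(pk,sk)\leftarrow\mathrm{KeyGen}()$; $(m_0,m_1,s)\leftarrow\mathsf{A}(pk)$; $b\xleftarrow{\$}\{0,1\}$; $c^*\leftarrow\mathrm{Enc}(pk,m_b)$; $b'\leftarrow\mathsf{A}(s,c^* )$. NTRU advantage: $\mathbf{Adv}^{\text{NTRU}}_{\mathcal{R}_q,\Psi_1}(\mathsf{B})=|\Pr[\mathsf{B}(h)=1]-\Pr[\mathsf{B}(u)=1]|$ where $h=g/f$ is distributed as the public key above ($g\leftarrow\Psi_1$, $f=2f'+1$ with $f'\leftarrow\Psi_1$, conditioned on $f$ invertible in $\mathcal{R}_q$) and $u$ is uniform in $\mathcal{R}_q$. RLWE advantage: $\mathbf{Adv}^{\text{RLWE}}_{\mathcal{R}_q,\Psi_2}(\mathsf{C})=|\Pr[\mathsf{C}(h,hr+e)=1]-\Pr[\mathsf{C}(h,u)=1]|$ where $h,u$ are uniform in $\mathcal{R}_q$ and $r,e\leftarrow\Psi_2$. *)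

theory Defs
  imports "HOL-Probability.Probability" "HOL-Computational_Algebra.Polynomial"
begin

text \<open>Elements of Z[x]/(x^n - x^(n/2) + 1) are represented by integer polynomials;
  elements of R_q by their canonical representatives: remainder modulo the (monic)
  modulus polynomial, with every coefficient reduced into [0, q).\<close>

definition ctru_phi :: "nat \<Rightarrow> int poly" where
  "ctru_phi n = monom 1 n - monom 1 (n div 2) + 1"

definition rq_red :: "int \<Rightarrow> nat \<Rightarrow> int poly \<Rightarrow> int poly" where
  "rq_red q n p = map_poly (\<lambda>c. c mod q) (pseudo_mod p (ctru_phi n))"

definition rq_carrier :: "int \<Rightarrow> nat \<Rightarrow> int poly set" where
  "rq_carrier q n = range (rq_red q n)"

definition rq_add :: "int \<Rightarrow> nat \<Rightarrow> int poly \<Rightarrow> int poly \<Rightarrow> int poly" where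
  "rq_add q n a b = rq_red q n (a + b)"

definition rq_mult :: "int \<Rightarrow> nat \<Rightarrow> int poly \<Rightarrow> int poly \<Rightarrow> int poly" where
  "rq_mult q n a b = rq_red q n (a * b)"

definition rq_invertible :: "int \<Rightarrow> nat \<Rightarrow> int poly \<Rightarrow> bool" where
  "rq_invertible q n f = (\<exists>g. rq_mult q n f g = rq_red q n 1)"

definition rq_inv :: "int \<Rightarrow> nat \<Rightarrow> int poly \<Rightarrow> int poly" where
  "rq_inv q n f = (SOME g. g \<in> rq_carrier q n \<and> rq_mult q n f g = rq_red q n 1)"

definition rq_div :: "int \<Rightarrow> nat \<Rightarrow> int poly \<Rightarrow> int poly \<Rightarrow> int poly" where
  "rq_div q n g f = rq_mult q n g (rq_inv q n f)"

definition rq_uniform :: "int \<Rightarrow> nat \<Rightarrow> int poly pmf" where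
  "rq_uniform q n = pmf_of_set (rq_carrier q n)"

definition ctru_H :: "int list list" where
  "ctru_H = [[1,1,1,1,0,0,0,0],
             [0,0,1,1,1,1,0,0],
             [0,0,0,0,1,1,1,1],
             [0,1,0,1,0,1,0,1]]"

text \<open>Coefficient k of PolyEncode(m): for k = 8i + j (j < 8), it is
  (q/2) * ((k_i H mod 2)_j) with k_i = (m_{4i},...,m_{4i+3}).\<close>
definition poly_encode_coeff :: "int \<Rightarrow> nat \<Rightarrow> bool list \<Rightarrow> nat \<Rightarrow> real" where
  "poly_encode_coeff q n m k =
     (if k < n then
        real_of_int q / 2 *
        of_int ((\<Sum>t<4. of_bool (m ! (4 * (k div 8) + t)) * (ctru_H ! t ! (k mod 8))) mod 2)
      else 0)"

definition poly_encode_round :: "int \<Rightarrow> nat \<Rightarrow> bool list \<Rightarrow> int poly" where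
  "poly_encode_round q n m = Poly (map (\<lambda>k. round (poly_encode_coeff q n m k)) [0..<n])"

definition ctru_compress :: "int \<Rightarrow> int \<Rightarrow> int poly \<Rightarrow> int poly" where
  "ctru_compress q q2 x =
     map_poly (\<lambda>a. round (real_of_int q2 / real_of_int q * real_of_int a) mod q2) x"

text \<open>KeyGen with restart = conditioning on invertibility of f = 2f'+1. Returns (pk, sk).\<close>
definition ctru_keygen :: "int \<Rightarrow> nat \<Rightarrow> int poly pmf \<Rightarrow> (int poly \<times> int poly) pmf" where
  "ctru_keygen q n \<Psi>1 =
     do { (f', g) \<leftarrow> cond_pmf (pair_pmf \<Psi>1 \<Psi>1) {(f', g). rq_invertible q n (2 * f' + 1)};
          let f = rq_red q n (2 * f' + 1);
          return_pmf (rq_div q n (rq_red q n g) f, f) }"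

definition ctru_enc :: "int \<Rightarrow> int \<Rightarrow> nat \<Rightarrow> int poly pmf \<Rightarrow> int poly \<Rightarrow> bool list \<Rightarrow> int poly pmf" where
  "ctru_enc q q2 n \<Psi>2 h m =
     do { r \<leftarrow> \<Psi>2; e \<leftarrow> \<Psi>2;
          let \<sigma> = rq_add q n (rq_mult q n h r) e;
          return_pmf (ctru_compress q q2 (\<sigma> + poly_encode_round q n m)) }"

definition ind_cpa_game ::
  "int \<Rightarrow> int \<Rightarrow> nat \<Rightarrow> int poly pmf \<Rightarrow> int poly pmf \<Rightarrow>
   (int poly \<Rightarrow> (bool list \<times> bool list \<times> 's) pmf) \<Rightarrow> ('s \<Rightarrow> int poly \<Rightarrow> bool pmf) \<Rightarrow> bool pmf" where
  "ind_cpa_game q q2 n \<Psi>1 \<Psi>2 A1 A2 =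
     do { (pk, sk) \<leftarrow> ctru_keygen q n \<Psi>1;
          (m0, m1, s) \<leftarrow> A1 pk;
          b \<leftarrow> bernoulli_pmf (1/2);
          c \<leftarrow> ctru_enc q q2 n \<Psi>2 pk (if b then m1 else m0);
          b' \<leftarrow> A2 s c;
          return_pmf (b' = b) }"

definition adv_ind_cpa ::
  "int \<Rightarrow> int \<Rightarrow> nat \<Rightarrow> int poly pmf \<Rightarrow> int poly pmf \<Rightarrow>
   (int poly \<Rightarrow> (bool list \<times> bool list \<times> 's) pmf) \<Rightarrow> ('s \<Rightarrow> int poly \<Rightarrow> bool pmf) \<Rightarrow> real" where
  "adv_ind_cpa q q2 n \<Psi>1 \<Psi>2 A1 A2 = \<bar>pmf (ind_cpa_game q q2 n \<Psi>1 \<Psi>2 A1 A2) True - 1/2\<bar>"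

definition adv_ntru :: "int \<Rightarrow> nat \<Rightarrow> int poly pmf \<Rightarrow> (int poly \<Rightarrow> bool pmf) \<Rightarrow> real" where
  "adv_ntru q n \<Psi>1 B =
     \<bar>pmf (bind_pmf (map_pmf fst (ctru_keygen q n \<Psi>1)) B) True
      - pmf (bind_pmf (rq_uniform q n) B) True\<bar>"

definition adv_rlwe :: "int \<Rightarrow> nat \<Rightarrow> int poly pmf \<Rightarrow> (int poly \<Rightarrow> int poly \<Rightarrow> bool pmf) \<Rightarrow> real" where
  "adv_rlwe q n \<Psi>2 C =
     \<bar>pmf (do { h \<leftarrow> rq_uniform q n; r \<leftarrow> \<Psi>2; e \<leftarrow> \<Psi>2;
                C h (rq_add q n (rq_mult q n h r) e) }) True
      - pmf (do { h \<leftarrow> rq_uniform q n; u \<leftarrow> rq_uniform q n; C h u }) True\<bar>"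

section \<open>The black-box reductions (each runs A once plus one encryption-like step)\<close>

definition ntru_reduction ::
  "int \<Rightarrow> int \<Rightarrow> nat \<Rightarrow> int poly pmf \<Rightarrow>
   (int poly \<Rightarrow> (bool list \<times> bool list \<times> 's) pmf) \<Rightarrow> ('s \<Rightarrow> int poly \<Rightarrow> bool pmf) \<Rightarrow>
   int poly \<Rightarrow> bool pmf" where
  "ntru_reduction q q2 n \<Psi>2 A1 A2 h =
     do { (m0, m1, s) \<leftarrow> A1 h;
          b \<leftarrow> bernoulli_pmf (1/2);
          c \<leftarrow> ctru_enc q q2 n \<Psi>2 h (if b then m1 else m0);
          b' \<leftarrow> A2 s c;
          return_pmf (b' = b) }"

definition rlwe_reduction ::
  "int \<Rightarrow> int \<Rightarrow> nat \<Rightarrow>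
   (int poly \<Rightarrow> (bool list \<times> bool list \<times> 's) pmf) \<Rightarrow> ('s \<Rightarrow> int poly \<Rightarrow> bool pmf) \<Rightarrow>
   int poly \<Rightarrow> int poly \<Rightarrow> bool pmf" where
  "rlwe_reduction q q2 n A1 A2 h \<sigma> =
     do { (m0, m1, s) \<leftarrow> A1 h;
          b \<leftarrow> bernoulli_pmf (1/2);
          b' \<leftarrow> A2 s (ctru_compress q q2 (\<sigma> + poly_encode_round q n (if b then m1 else m0)));
          return_pmf (b' = b) }"

end

theory Submission
  imports Defs
begin

(* The IND-CPA game is the NTRU reduction B run on the real public key; running
   B on a uniform h instead costs at most the NTRU advantage. For every h, B encrypts with the
   RLWE sample hr + e, i.e. it is the RLWE reduction C run on a real sample; replacing hr + e by
   a uniform u costs at most the RLWE advantage. Finally, u + PolyEncode(m_b) reduced mod q is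
   again uniform on R_q (translation permutes R_q) and compression only sees coefficients mod q,
   so the challenge ciphertext is independent of b and the adversary wins with probability 1/2. *)

lemma coeff_ctru_phi:
  "coeff (ctru_phi n) i = of_bool (i = n) - of_bool (i = n div 2) + of_bool (i = 0)"
  by (simp add: ctru_phi_def coeff_monom)

lemma degree_ctru_phi: "0 < n \<Longrightarrow> degree (ctru_phi n) = n"
  by (intro antisym degree_le le_degree) (auto simp: coeff_ctru_phi)

lemma lead_coeff_ctru_phi: "0 < n \<Longrightarrow> lead_coeff (ctru_phi n) = 1"
  by (simp add: degree_ctru_phi coeff_ctru_phi)

lemma pseudo_mod_eq_self:
  fixes p g :: "'a::idom poly"
  assumes monic: "lead_coeff g = 1" and small: "degree p < degree g"
  shows "pseudo_mod p g = p"
proof -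
  have g: "g \<noteq> 0" using monic by auto
  obtain d r where pd: "pseudo_divmod p g = (d, r)" by fastforce
  have r: "pseudo_mod p g = r" using pd by (simp add: pseudo_mod_def)
  have p: "p = g * d + r" using pseudo_divmod(1)[OF g pd] monic by simp
  have "degree (p - r) < degree g"
    using pseudo_divmod(2)[OF g pd] small degree_diff_le_max[of p r] by auto
  then have "d = 0" using p degree_mult_eq[OF g, of d] by (cases "d = 0") auto
  then show ?thesis using p r by simp
qed

lemma degree_rq_red: "0 < n \<Longrightarrow> degree (rq_red q n p) < n"
  using pseudo_mod(2)[of "ctru_phi n" p] lead_coeff_ctru_phi[of n] degree_ctru_phi[of n]
    map_poly_degree_leq[of "\<lambda>c. c mod q" "pseudo_mod p (ctru_phi n)"]
  unfolding rq_red_def by fastforce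

lemma rq_red_eq_map_mod:
  assumes "0 < n" "degree p < n"
  shows "rq_red q n p = map_poly (\<lambda>c. c mod q) p"
proof -
  have "pseudo_mod p (ctru_phi n) = p"
    using lead_coeff_ctru_phi[OF assms(1)] degree_ctru_phi[OF assms(1)] assms(2)
    by (intro pseudo_mod_eq_self) simp_all
  then show ?thesis by (simp add: rq_red_def)
qed

lemma coeff_map_mod: "coeff (map_poly (\<lambda>c. c mod (q::int)) p) i = coeff p i mod q"
  by (simp add: coeff_map_poly)

lemma rq_carrier_eq:
  assumes "0 < n" "0 < q"
  shows "rq_carrier q n = {p. degree p < n \<and> (\<forall>i. coeff p i \<in> {0..<q})}"
proof (intro equalityI subsetI)
  fix p assume "p \<in> rq_carrier q n"
  then show "p \<in> {p. degree p < n \<and> (\<forall>i. coeff p i \<in> {0..<q})}"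
    using assms degree_rq_red by (auto simp: rq_carrier_def rq_red_def coeff_map_mod)
next
  fix p assume p: "p \<in> {p. degree p < n \<and> (\<forall>i. coeff p i \<in> {0..<q})}"
  then have "rq_red q n p = p"
    by (intro poly_eqI) (auto simp: rq_red_eq_map_mod assms coeff_map_mod)
  then show "p \<in> rq_carrier q n" unfolding rq_carrier_def by (metis rangeI)
qed

lemma finite_rq_carrier:
  assumes "0 < n" "0 < q"
  shows "finite (rq_carrier q n)"
proof (rule finite_subset)
  show "rq_carrier q n \<subseteq> Poly ` {xs. set xs \<subseteq> {0..<q} \<and> length xs = n}"
  proof
    fix p assume "p \<in> rq_carrier q n"
    then have p: "degree p < n" "\<And>i. coeff p i \<in> {0..<q}" by (auto simp: rq_carrier_eq assms)
    have "p = Poly (map (coeff p) [0..<n])"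
      by (rule poly_eqI) (use p in \<open>auto simp: nth_default_def coeff_eq_0\<close>)
    with p(2) show "p \<in> Poly ` {xs. set xs \<subseteq> {0..<q} \<and> length xs = n}" by force
  qed
  show "finite (Poly ` {xs. set xs \<subseteq> {0..<q} \<and> length xs = n})"
    by (intro finite_imageI finite_lists_length_eq) simp
qed

lemma set_pmf_rq_uniform: "0 < n \<Longrightarrow> 0 < q \<Longrightarrow> set_pmf (rq_uniform q n) = rq_carrier q n"
  using finite_rq_carrier[of n q] by (simp add: rq_uniform_def rq_carrier_def)

lemma rq_uniform_translate:
  assumes n: "0 < n" and q: "0 < q" and E: "degree E < n"
  shows "map_pmf (\<lambda>u. rq_red q n (u + E)) (rq_uniform q n) = rq_uniform q n"
proof -
  let ?C = "rq_carrier q n" and ?T = "\<lambda>u. rq_red q n (u + E)"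
  have coeff_T: "coeff (?T u) i = (coeff u i + coeff E i) mod q" if "u \<in> ?C" for u i
    using that E degree_add_le_max[of u E]
    by (auto simp: rq_carrier_eq n q rq_red_eq_map_mod[OF n] coeff_map_mod)
  have "inj_on ?T ?C"
  proof (rule inj_onI, rule poly_eqI)
    fix u v i assume u: "u \<in> ?C" and v: "v \<in> ?C" and "?T u = ?T v"
    then have "(coeff u i + coeff E i) mod q = (coeff v i + coeff E i) mod q"
      by (metis coeff_T)
    then have "coeff u i mod q = coeff v i mod q" by (metis add_diff_cancel_right' mod_diff_left_eq)
    with u v show "coeff u i = coeff v i" by (simp add: rq_carrier_eq n q)
  qed
  moreover have "?T ` ?C \<subseteq> ?C" by (auto simp: rq_carrier_def)
  ultimately have "bij_betw ?T ?C ?C"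
    using endo_inj_surj[OF finite_rq_carrier[OF n q]] by (simp add: bij_betw_def)
  then show ?thesis
    unfolding rq_uniform_def
    by (rule map_pmf_of_set_bij_betw) (use finite_rq_carrier[OF n q] in \<open>auto simp: rq_carrier_def\<close>)
qed

lemma round_add_of_int: "round (x + of_int k) = round x + k"
  unfolding round_def by (metis add.commute add.left_commute floor_add_int)

lemma ctru_compress_map_mod:
  assumes "0 < q"
  shows "ctru_compress q q2 (map_poly (\<lambda>c. c mod q) p) = ctru_compress q q2 p"
proof (rule poly_eqI)
  fix i
  let ?a = "coeff p i"
  have "real_of_int ?a = of_int (?a mod q) + of_int q * of_int (?a div q)"
    by (metis of_int_add of_int_mult mod_mult_div_eq)
  then have "real_of_int q2 / q * ?a = real_of_int q2 / q * (?a mod q) + of_int (q2 * (?a div q))"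
    using assms by (simp add: field_simps)
  then have "round (real_of_int q2 / q * ?a) = round (real_of_int q2 / q * (?a mod q)) + q2 * (?a div q)"
    by (simp only: round_add_of_int)
  then show "coeff (ctru_compress q q2 (map_poly (\<lambda>c. c mod q) p)) i = coeff (ctru_compress q q2 p) i"
    by (simp add: ctru_compress_def coeff_map_poly)
qed

lemma ctru_compress_translate_uniform:
  assumes n: "0 < n" and q: "0 < q" and E: "degree E < n"
  shows "map_pmf (\<lambda>u. ctru_compress q q2 (u + E)) (rq_uniform q n)
       = map_pmf (ctru_compress q q2) (rq_uniform q n)"
proof -
  have "map_pmf (\<lambda>u. ctru_compress q q2 (u + E)) (rq_uniform q n)
      = map_pmf (\<lambda>u. ctru_compress q q2 (rq_red q n (u + E))) (rq_uniform q n)"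
  proof (rule map_pmf_cong[OF refl])
    fix u assume "u \<in> set_pmf (rq_uniform q n)"
    then have "degree (u + E) < n"
      using E degree_add_le_max[of u E] by (auto simp: set_pmf_rq_uniform n q rq_carrier_eq)
    then show "ctru_compress q q2 (u + E) = ctru_compress q q2 (rq_red q n (u + E))"
      by (simp add: rq_red_eq_map_mod n ctru_compress_map_mod q)
  qed
  also have "\<dots> = map_pmf (ctru_compress q q2) (map_pmf (\<lambda>u. rq_red q n (u + E)) (rq_uniform q n))"
    by (simp add: map_pmf_comp)
  finally show ?thesis by (simp only: rq_uniform_translate[OF n q E])
qed

lemma degree_poly_encode_round: "0 < n \<Longrightarrow> degree (poly_encode_round q n m) < n"
  using degree_le[of "n - 1" "poly_encode_round q n m"]
  by (fastforce simp: poly_encode_round_def nth_default_def)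

lemma bind_commute_pmf_twice:
  "bind_pmf X (\<lambda>x. bind_pmf Y (\<lambda>y. bind_pmf Z (F x y)))
   = bind_pmf Y (\<lambda>y. bind_pmf Z (\<lambda>z. bind_pmf X (\<lambda>x. F x y z)))"
  by (subst bind_commute_pmf) (subst bind_commute_pmf, rule refl)

lemma fair_coin_guess:
  "bind_pmf (bernoulli_pmf (1/2)) (\<lambda>b. map_pmf (\<lambda>b'. b' = b) D) = bernoulli_pmf (1/2)"
proof -
  have "bind_pmf (bernoulli_pmf (1/2)) (\<lambda>b. return_pmf (c = b)) = bernoulli_pmf (1/2)" for c
    by (rule pmf_eqI) (auto simp: pmf_bind indicator_def)
  then show ?thesis
    unfolding map_pmf_def by (subst bind_commute_pmf) simp
qed

lemma ind_cpa_game_eq_ntru_reduction: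
  "ind_cpa_game q q2 n \<Psi>1 \<Psi>2 A1 A2
   = bind_pmf (map_pmf fst (ctru_keygen q n \<Psi>1)) (ntru_reduction q q2 n \<Psi>2 A1 A2)"
  unfolding ind_cpa_game_def ntru_reduction_def
  by (simp add: bind_map_pmf case_prod_unfold)

lemma ntru_reduction_eq_rlwe_reduction:
  "ntru_reduction q q2 n \<Psi>2 A1 A2 h
   = do { r \<leftarrow> \<Psi>2; e \<leftarrow> \<Psi>2; rlwe_reduction q q2 n A1 A2 h (rq_add q n (rq_mult q n h r) e) }"
  unfolding ntru_reduction_def rlwe_reduction_def ctru_enc_def
  by (simp add: bind_assoc_pmf bind_return_pmf case_prod_unfold Let_def,
      subst bind_commute_pmf_twice[where X = "bernoulli_pmf (1/2)"],
      subst bind_commute_pmf_twice[where X = "A1 h"], rule refl)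

lemma rlwe_reduction_uniform:
  assumes n: "0 < n" and q: "0 < q"
  shows "bind_pmf (rq_uniform q n) (rlwe_reduction q q2 n A1 A2 h) = bernoulli_pmf (1/2)"
proof -
  let ?U = "rq_uniform q n" and ?c = "ctru_compress q q2"
  have guess_independent:
    "bind_pmf ?U (\<lambda>u. bind_pmf (A2 s (?c (u + poly_encode_round q n m))) (\<lambda>b'. return_pmf (b' = b)))
     = map_pmf (\<lambda>b'. b' = b) (bind_pmf (map_pmf ?c ?U) (A2 s))" for s m b
  proof -
    have "bind_pmf ?U (\<lambda>u. bind_pmf (A2 s (?c (u + poly_encode_round q n m))) (\<lambda>b'. return_pmf (b' = b)))
        = map_pmf (\<lambda>b'. b' = b) (bind_pmf (map_pmf (\<lambda>u. ?c (u + poly_encode_round q n m)) ?U) (A2 s))"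
      by (simp add: map_pmf_def bind_assoc_pmf bind_return_pmf)
    then show ?thesis
      by (simp only: ctru_compress_translate_uniform[OF n q degree_poly_encode_round[OF n]])
  qed
  have "bind_pmf ?U (rlwe_reduction q q2 n A1 A2 h)
      = bind_pmf (A1 h) (\<lambda>(m0, m1, s). bind_pmf (bernoulli_pmf (1/2)) (\<lambda>b.
          bind_pmf ?U (\<lambda>u. bind_pmf (A2 s (?c (u + poly_encode_round q n (if b then m1 else m0))))
            (\<lambda>b'. return_pmf (b' = b)))))"
    unfolding rlwe_reduction_def case_prod_unfold by (rule bind_commute_pmf_twice)
  also have "\<dots> = bind_pmf (A1 h) (\<lambda>(m0, m1, s). bind_pmf (bernoulli_pmf (1/2)) (\<lambda>b.
          map_pmf (\<lambda>b'. b' = b) (bind_pmf (map_pmf ?c ?U) (A2 s))))"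
    by (simp only: guess_independent)
  also have "\<dots> = bernoulli_pmf (1/2)"
    by (simp add: fair_coin_guess case_prod_unfold)
  finally show ?thesis .
qed

theorem theorem4:
  fixes l e n :: nat and q q2 :: int and \<Psi>1 \<Psi>2 :: "int poly pmf"
    and A1 :: "int poly \<Rightarrow> (bool list \<times> bool list \<times> 's) pmf"
    and A2 :: "'s \<Rightarrow> int poly \<Rightarrow> bool pmf"
  assumes "n = 3 ^ l * 2 ^ e" and "8 dvd n"
    and "0 < q2" and "q2 < q" and "gcd q 2 = 1"
    and "\<forall>pk. \<forall>(m0, m1, s) \<in> set_pmf (A1 pk). length m0 = n div 2 \<and> length m1 = n div 2"
  shows "adv_ind_cpa q q2 n \<Psi>1 \<Psi>2 A1 A2
           \<le> adv_ntru q n \<Psi>1 (ntru_reduction q q2 n \<Psi>2 A1 A2)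
             + adv_rlwe q n \<Psi>2 (rlwe_reduction q q2 n A1 A2)"
proof -
  have n: "0 < n" and q: "0 < q" using assms(1,3,4) by simp_all
  let ?B = "ntru_reduction q q2 n \<Psi>2 A1 A2" and ?C = "rlwe_reduction q q2 n A1 A2"
  define P_real where "P_real = pmf (bind_pmf (map_pmf fst (ctru_keygen q n \<Psi>1)) ?B) True"
  define P_uniform where "P_uniform = pmf (bind_pmf (rq_uniform q n) ?B) True"
  have hybrid: "bind_pmf (rq_uniform q n) ?B
      = do { h \<leftarrow> rq_uniform q n; r \<leftarrow> \<Psi>2; e \<leftarrow> \<Psi>2; ?C h (rq_add q n (rq_mult q n h r) e) }"
    by (rule bind_pmf_cong[OF refl]) (rule ntru_reduction_eq_rlwe_reduction)
  have "adv_ind_cpa q q2 n \<Psi>1 \<Psi>2 A1 A2 = \<bar>P_real - 1/2\<bar>"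
    by (simp add: adv_ind_cpa_def ind_cpa_game_eq_ntru_reduction P_real_def)
  moreover have "adv_ntru q n \<Psi>1 ?B = \<bar>P_real - P_uniform\<bar>"
    by (simp add: adv_ntru_def P_real_def P_uniform_def)
  moreover have "adv_rlwe q n \<Psi>2 ?C = \<bar>P_uniform - 1/2\<bar>"
    by (simp add: adv_rlwe_def P_uniform_def hybrid rlwe_reduction_uniform n q)
  ultimately show ?thesis by linarith
qed

end
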